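(* Let $X$ and $Y$ be real Banach spaces with $Y$ reflexive. Let $F\colon X\to Y$ be a continuous function and let $L>0$. For each $y^*\in Y^*$ define $\phi_{y^*}\colon X\to\mathbb{R}$ by $\phi_{y^*}(x)=y^*(F(x))$. Suppose that for each $y^*\in Y^*$ with $\|y^*\|\le 1$, the function $\phi_{y^*}$ is Fréchet differentiable on $X$ and its derivative $\phi_{y^*}'\colon X\to X^*$ is $L$-Lipschitz continuous. Then $F$ is Fréchet differentiable on $X$ and its derivative $F'\colon X\to\mathcal{B}(X,Y)$ is $L$-Lipschitz continuous, i.e. $\|F'(x)-F'(y)\|\le L\|x-y\|$ for all $x,y\in X$ (operator norm on the left).
   Context: $X^*$, $Y^*$ denote the continuous dual spaces with dual norms; $\mathcal{B}(X,Y)$ is the space of bounded linear operators $X\to Y$ with the operator norm $\|T\|=\sup_{\|x\|\le 1}\|T(x)\|$. *)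

theory Defs
  imports "HOL-Analysis.Analysis"
begin

definition reflexive_space :: "'b::real_normed_vector itself \<Rightarrow> bool" where
  "reflexive_space _ \<longleftrightarrow>
     (\<forall>\<psi> :: ('b \<Rightarrow>\<^sub>L real) \<Rightarrow>\<^sub>L real. \<exists>y::'b. \<forall>f. blinfun_apply \<psi> f = blinfun_apply f y)"

end

theory Submission
  imports Defs
begin

text \<open>Write \<open>D f\<close> for the derivative of \<open>f \<circ> F\<close>, \<open>f\<close> a functional on \<open>'b\<close>. For fixed
  \<open>x\<close> and \<open>h\<close>, the map \<open>f \<mapsto> D f x h\<close> is linear by uniqueness of derivatives and, by
  the mean value inequality, bounded by \<open>norm f * (norm (F (x + h) - F x) + L * norm h ^ 2)\<close>.
  Reflexivity represents it by a vector \<open>DF x h\<close>. Since the unit ball of the dual norms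
  \<open>'b\<close> (Hahn--Banach), every scalar estimate transfers to \<open>DF\<close>: the remainder bound
  \<open>L * norm f * norm h ^ 2\<close> makes \<open>DF x\<close> the Frechet derivative of \<open>F\<close>, and the Lipschitz
  bounds of the \<open>D f\<close> give that of \<open>DF\<close>. Continuity of \<open>F\<close> at \<open>x\<close> is what makes
  \<open>DF x\<close> a bounded operator.\<close>

section \<open>Norming functionals\<close>

text \<open>A partial linear functional dominated by the norm, encoded by its graph in
  \<open>'b \<times> real\<close>, so that Zorn's lemma can be applied to graphs ordered by inclusion.\<close>

definition norm_dominated_graph :: "('b::real_normed_vector \<times> real) set \<Rightarrow> bool" where
  "norm_dominated_graph G \<longleftrightarrow> subspace G \<and> (\<forall>(x, a) \<in> G. a \<le> norm x)"

lemma norm_dominated_graphD: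
  assumes "norm_dominated_graph G"
  shows "subspace G" and "(x, a) \<in> G \<Longrightarrow> a \<le> norm x"
  using assms by (auto simp: norm_dominated_graph_def)

lemma norm_dominated_graph_scale:
  assumes "norm_dominated_graph G" "(x, a) \<in> G"
  shows "(r *\<^sub>R x, r * a) \<in> G"
  using subspace_scale[OF norm_dominated_graphD(1)[OF assms(1)] assms(2), of r] by simp

lemma norm_dominated_graph_abs_le:
  assumes "norm_dominated_graph G" "(x, a) \<in> G"
  shows "\<bar>a\<bar> \<le> norm x"
proof -
  have "(-x, -a) \<in> G"
    using assms subspace_neg[of G "(x, a)"] by (simp add: norm_dominated_graph_def)
  then have "-a \<le> norm x"
    using norm_dominated_graphD(2)[OF assms(1)] by fastforce
  with norm_dominated_graphD(2)[OF assms] show ?thesis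
    by linarith
qed

lemma norm_dominated_graph_single_valued:
  assumes "norm_dominated_graph G" "(x, a) \<in> G" "(x, b) \<in> G"
  shows "a = b"
proof -
  have "(0, a - b) \<in> G"
    using assms subspace_diff[of G "(x, a)" "(x, b)"] by (simp add: norm_dominated_graph_def)
  then show ?thesis
    using norm_dominated_graph_abs_le[OF assms(1)] by fastforce
qed

lemma norm_dominated_graph_Union_chain:
  assumes "\<C> \<noteq> {}" "subset.chain {G. norm_dominated_graph G} \<C>"
  shows "norm_dominated_graph (\<Union>\<C>)"
proof -
  have dom: "\<And>G. G \<in> \<C> \<Longrightarrow> norm_dominated_graph G"
   and chain: "\<And>G H. G \<in> \<C> \<Longrightarrow> H \<in> \<C> \<Longrightarrow> G \<subseteq> H \<or> H \<subseteq> G"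
    using assms(2) by (auto simp: subset.chain_def)
  have "subspace (\<Union>\<C>)"
    unfolding subspace_def
  proof (intro conjI ballI allI)
    show "0 \<in> \<Union>\<C>"
      using assms(1) dom by (force simp: norm_dominated_graph_def subspace_0)
    fix p q assume "p \<in> \<Union>\<C>" "q \<in> \<Union>\<C>"
    then obtain G H where "G \<in> \<C>" "H \<in> \<C>" "p \<in> G" "q \<in> H" by blast
    with chain[of G H] dom norm_dominated_graphD(1) show "p + q \<in> \<Union>\<C>"
      by (metis UnionI subset_iff subspace_add)
  next
    fix c p assume "p \<in> \<Union>\<C>"
    with dom show "c *\<^sub>R p \<in> \<Union>\<C>"
      by (auto simp: norm_dominated_graph_def dest: subspace_scale)
  qed
  with dom show ?thesis
    by (fastforce simp: norm_dominated_graph_def)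
qed

lemma norm_dominated_graph_extend:
  fixes y :: "'b::real_normed_vector"
  assumes G: "norm_dominated_graph G"
  shows "\<exists>G'. norm_dominated_graph G' \<and> G \<subseteq> G' \<and> (\<exists>c. (y, c) \<in> G')"
proof -
  note bound = norm_dominated_graphD(2)[OF G]
  have "(0, 0) \<in> G"
    using subspace_0[OF norm_dominated_graphD(1)[OF G]] by (simp add: zero_prod_def)
  have below_above: "a - norm (x - y) \<le> norm (z + y) - b" if "(x, a) \<in> G" "(z, b) \<in> G" for x a z b
  proof -
    have "a + b \<le> norm (x + z)"
      using bound subspace_add[OF norm_dominated_graphD(1)[OF G] that] by simp
    also have "\<dots> \<le> norm (x - y) + norm (z + y)"
      using norm_triangle_ineq[of "x - y" "z + y"] by simp
    finally show ?thesis by simp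
  qed
  define c where "c = (SUP (x, a)\<in>G. a - norm (x - y))"
  have bdd: "bdd_above ((\<lambda>(x, a). a - norm (x - y)) ` G)"
    using below_above[OF _ \<open>(0, 0) \<in> G\<close>] by (force intro: bdd_aboveI2)
  have c_ge: "a - norm (x - y) \<le> c" if "(x, a) \<in> G" for x a
    unfolding c_def using cSUP_upper[OF that bdd] by simp
  have c_le: "c \<le> norm (z + y) - b" if "(z, b) \<in> G" for z b
    unfolding c_def using below_above[OF _ that] \<open>(0, 0) \<in> G\<close> by (force intro: cSUP_least)
  have dominated: "a + t * c \<le> norm (x + t *\<^sub>R y)" if "(x, a) \<in> G" for x a t
  proof (cases t "0::real" rule: linorder_cases)
    case less
    have "(-1/t) * a - norm ((-1/t) *\<^sub>R x - y) \<le> c"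
      using c_ge[OF norm_dominated_graph_scale[OF G that]] .
    then have "(-t) * ((-1/t) * a - norm ((-1/t) *\<^sub>R x - y)) \<le> (-t) * c"
      using less by (intro mult_left_mono) auto
    moreover have "(-t) *\<^sub>R ((-1/t) *\<^sub>R x - y) = x + t *\<^sub>R y"
      using less by (simp add: algebra_simps)
    then have "(-t) * norm ((-1/t) *\<^sub>R x - y) = norm (x + t *\<^sub>R y)"
      using less by (metis abs_of_pos neg_0_less_iff_less norm_scaleR)
    ultimately show ?thesis
      using less by (simp add: algebra_simps)
  next
    case equal
    then show ?thesis using bound[OF that] by simp
  next
    case greater
    have "c \<le> norm ((1/t) *\<^sub>R x + y) - (1/t) * a"
      using c_le[OF norm_dominated_graph_scale[OF G that]] .
    then have "t * c \<le> t * (norm ((1/t) *\<^sub>R x + y) - (1/t) * a)"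
      using greater by (intro mult_left_mono) auto
    moreover have "t *\<^sub>R ((1/t) *\<^sub>R x + y) = x + t *\<^sub>R y"
      using greater by (simp add: algebra_simps)
    then have "t * norm ((1/t) *\<^sub>R x + y) = norm (x + t *\<^sub>R y)"
      using greater by (metis abs_of_pos norm_scaleR)
    ultimately show ?thesis
      using greater by (simp add: algebra_simps)
  qed
  define G' where "G' = {p + q | p q. p \<in> G \<and> q \<in> span {(y, c)}}"
  have "subspace G'"
    unfolding G'_def by (intro subspace_sums norm_dominated_graphD(1)[OF G] subspace_span)
  moreover have "b \<le> norm z" if "(z, b) \<in> G'" for z b
    using that dominated by (auto simp: G'_def span_singleton)
  moreover have "G \<subseteq> G'"
  proof
    fix p assume "p \<in> G"
    then show "p \<in> G'"
      unfolding G'_def by (intro CollectI exI[of _ p] exI[of _ 0]) (simp add: span_0)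
  qed
  moreover have "(y, c) \<in> G'"
    unfolding G'_def using \<open>(0, 0) \<in> G\<close> by (force intro: span_base)
  ultimately show ?thesis
    unfolding norm_dominated_graph_def by blast
qed

theorem exists_norming_functional:
  fixes y :: "'b::real_normed_vector"
  shows "\<exists>f::'b \<Rightarrow>\<^sub>L real. norm f \<le> 1 \<and> blinfun_apply f y = norm y"
proof -
  define \<A> where "\<A> = {G. norm_dominated_graph G \<and> (y, norm y) \<in> G}"
  have "span {(y, norm y)} \<in> \<A>"
  proof -
    have "a \<le> norm x" if "(x, a) \<in> span {(y, norm y)}" for x a
      using that by (auto simp: span_singleton mult_right_mono)
    then show ?thesis
      unfolding \<A>_def norm_dominated_graph_def by (auto intro: subspace_span span_base)
  qed
  moreover have "\<Union>\<C> \<in> \<A>" if "\<C> \<noteq> {}" "subset.chain \<A> \<C>" for \<C>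
  proof -
    have "\<C> \<subseteq> \<A>"
      using that(2) by (simp add: subset.chain_def)
    then have "subset.chain {G. norm_dominated_graph G} \<C>" "(y, norm y) \<in> \<Union>\<C>"
      using that by (auto simp: subset.chain_def \<A>_def)
    then show ?thesis
      using norm_dominated_graph_Union_chain[OF that(1)] by (simp add: \<A>_def)
  qed
  ultimately obtain M where M: "norm_dominated_graph M" "(y, norm y) \<in> M"
    and maximal: "\<And>G. G \<in> \<A> \<Longrightarrow> M \<subseteq> G \<Longrightarrow> G = M"
    using subset_Zorn_nonempty[of \<A>] unfolding \<A>_def by blast
  have total: "\<exists>a. (v, a) \<in> M" for v
  proof -
    obtain G c where "norm_dominated_graph G" "M \<subseteq> G" "(v, c) \<in> G"
      using norm_dominated_graph_extend[OF M(1), of v] by blast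
    with maximal[of G] M(2) show ?thesis
      unfolding \<A>_def by blast
  qed
  define f where "f v = (THE a. (v, a) \<in> M)" for v
  have f_eq: "f v = a" if "(v, a) \<in> M" for v a
    unfolding f_def using that norm_dominated_graph_single_valued[OF M(1)] by blast
  have graph: "(v, f v) \<in> M" for v
    using total[of v] f_eq by blast
  have "linear f"
  proof
    show "f (u + v) = f u + f v" for u v
      using subspace_add[OF norm_dominated_graphD(1)[OF M(1)] graph graph] f_eq by simp
    show "f (r *\<^sub>R v) = r *\<^sub>R f v" for r v
      using norm_dominated_graph_scale[OF M(1) graph] f_eq by simp
  qed
  moreover have f_bound: "\<bar>f v\<bar> \<le> norm v" for v
    using norm_dominated_graph_abs_le[OF M(1) graph] .
  ultimately have "bounded_linear f"
    by (auto intro!: bounded_linear_intro[where K=1] simp: linear_add linear_scale)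
  moreover have "norm (Blinfun f) \<le> 1"
    using f_bound
    by (intro norm_blinfun_bound) (simp_all add: bounded_linear_Blinfun_apply[OF \<open>bounded_linear f\<close>])
  moreover have "f y = norm y"
    using f_eq[OF M(2)] .
  ultimately show ?thesis
    by (metis bounded_linear_Blinfun_apply)
qed

corollary norm_le_if_dual_ball_le:
  fixes v :: "'b::real_normed_vector"
  assumes "\<And>f::'b \<Rightarrow>\<^sub>L real. norm f \<le> 1 \<Longrightarrow> blinfun_apply f v \<le> c"
  shows "norm v \<le> c"
proof -
  obtain f :: "'b \<Rightarrow>\<^sub>L real" where "norm f \<le> 1" "blinfun_apply f v = norm v"
    using exists_norming_functional by blast
  with assms[of f] show ?thesis
    by simp
qed

corollary dual_separates_points:
  fixes u v :: "'b::real_normed_vector"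
  assumes "\<And>f::'b \<Rightarrow>\<^sub>L real. blinfun_apply f u = blinfun_apply f v"
  shows "u = v"
proof -
  have "norm (u - v) \<le> 0"
    using assms by (intro norm_le_if_dual_ball_le) (simp add: blinfun.diff_right)
  then show ?thesis by simp
qed

section \<open>Estimates for Frechet derivatives\<close>

lemma lipschitz_deriv_remainder_bound:
  fixes g :: "'a::real_normed_vector \<Rightarrow> 'c::real_normed_vector"
  assumes deriv: "\<And>x. (g has_derivative blinfun_apply (D x)) (at x)"
    and lipschitz: "\<And>x y. norm (D x - D y) \<le> K * norm (x - y)"
    and "K \<ge> 0"
  shows "norm (g (x + h) - g x - D x h) \<le> K * norm h ^ 2"
proof -
  define S where "S = {x + t *\<^sub>R h | t. t \<in> {0..1}}"
  have "norm (g (x + h) - g x - D x ((x + h) - x)) \<le> norm ((x + h) - x) * (K * norm h)"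
  proof (rule differentiable_bound_linearization[where S=S])
    show "x + t *\<^sub>R (x + h - x) \<in> S" if "t \<in> {0..1}" for t
      using that by (auto simp: S_def)
    show "(g has_derivative blinfun_apply (D z)) (at z within S)" for z
      using deriv has_derivative_at_withinI by blast
    show "x \<in> S"
      unfolding S_def by (intro CollectI exI[of _ 0]) simp
    fix z assume "z \<in> S"
    then obtain t where t: "t \<in> {0..1}" "z = x + t *\<^sub>R h"
      by (auto simp: S_def)
    have "onorm (blinfun_apply (D z) - blinfun_apply (D x)) = norm (D z - D x)"
      by (simp add: norm_blinfun.rep_eq minus_blinfun.rep_eq fun_diff_def)
    also have "\<dots> \<le> K * norm (z - x)"
      by (rule lipschitz)
    also have "\<dots> \<le> K * norm h"
      using t \<open>K \<ge> 0\<close> by (auto intro!: mult_left_mono simp: mult_left_le_one_le)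
    finally show "onorm (blinfun_apply (D z) - blinfun_apply (D x)) \<le> K * norm h" .
  qed
  then show ?thesis
    by (simp add: power2_eq_square mult_ac)
qed

lemma bounded_linear_if_bounded_on_cball:
  assumes "linear T" "\<delta> > 0" "\<And>h. norm h \<le> \<delta> \<Longrightarrow> norm (T h) \<le> M"
  shows "bounded_linear T"
proof -
  have "norm (T h) \<le> norm h * (M / \<delta>)" for h
  proof (cases "h = 0")
    case True
    then show ?thesis
      using linear_0[OF assms(1)] by simp
  next
    case False
    define k where "k = \<delta> / norm h"
    have "k > 0"
      using False assms(2) by (simp add: k_def)
    have "k * norm (T h) = norm (T (k *\<^sub>R h))"
      using \<open>k > 0\<close> by (simp add: linear_scale[OF assms(1)])
    also have "\<dots> \<le> M"
      using False assms(2) by (intro assms(3)) (simp add: k_def)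
    finally show ?thesis
      using \<open>k > 0\<close> False assms(2) by (simp add: k_def field_simps)
  qed
  with assms(1) show ?thesis
    by (intro bounded_linear_intro[where K="M / \<delta>"]) (simp_all add: linear_add linear_scale)
qed

lemma has_derivative_if_quadratic_remainder:
  assumes "bounded_linear T"
    and "\<And>y. norm (f y - f x - T (y - x)) \<le> K * norm (y - x) ^ 2"
  shows "(f has_derivative T) (at x)"
  unfolding has_derivative_iff_norm
proof (intro conjI assms(1))
  have quotient_bound: "norm (norm (f y - f x - T (y - x)) / norm (y - x)) \<le> K * norm (y - x)" for y
  proof (cases "y = x")
    case False
    then have "norm (y - x) > 0"
      by simp
    then show ?thesis
      using assms(2)[of y] by (simp add: pos_divide_le_eq power2_eq_square mult.assoc)
  qed simp
  have "((\<lambda>y. K * norm (y - x)) \<longlongrightarrow> 0) (at x)"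
    using tendsto_mult_right_zero[OF tendsto_norm_zero[OF LIM_zero[OF tendsto_ident_at]]] .
  then show "((\<lambda>y. norm (f y - f x - T (y - x)) / norm (y - x)) \<longlongrightarrow> 0) (at x)"
    by (rule Lim_null_comparison[OF always_eventually[OF allI[OF quotient_bound]]])
qed

section \<open>Maps whose scalarizations have Lipschitz derivatives\<close>

lemma lipschitz_derivs_of_all_functionals:
  fixes F :: "'a::real_normed_vector \<Rightarrow> 'b::real_normed_vector"
  assumes "\<forall>ys :: 'b \<Rightarrow>\<^sub>L real. norm ys \<le> 1 \<longrightarrow>
           (\<exists>D :: 'a \<Rightarrow> ('a \<Rightarrow>\<^sub>L real).
              (\<forall>x. ((\<lambda>z. blinfun_apply ys (F z)) has_derivative blinfun_apply (D x)) (at x)) \<and>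
              (\<forall>x y. norm (D x - D y) \<le> L * norm (x - y)))"
  shows "\<exists>D :: ('b \<Rightarrow>\<^sub>L real) \<Rightarrow> 'a \<Rightarrow> ('a \<Rightarrow>\<^sub>L real). \<forall>ys x y.
           ((\<lambda>z. blinfun_apply ys (F z)) has_derivative blinfun_apply (D ys x)) (at x) \<and>
           norm (D ys x - D ys y) \<le> L * norm ys * norm (x - y)"
proof -
  have "\<exists>D' :: 'a \<Rightarrow> ('a \<Rightarrow>\<^sub>L real). \<forall>x y.
          ((\<lambda>z. blinfun_apply ys (F z)) has_derivative blinfun_apply (D' x)) (at x) \<and>
          norm (D' x - D' y) \<le> L * norm ys * norm (x - y)" for ys :: "'b \<Rightarrow>\<^sub>L real"
  proof -
    have "norm (sgn ys) \<le> 1"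
      by (simp add: norm_sgn)
    with assms obtain D where
      deriv: "\<And>x. ((\<lambda>z. blinfun_apply (sgn ys) (F z)) has_derivative blinfun_apply (D x)) (at x)"
      and lipschitz: "\<And>x y. norm (D x - D y) \<le> L * norm (x - y)"
      by blast
    have ys_eq: "blinfun_apply ys v = norm ys * blinfun_apply (sgn ys) v" for v
      by (cases "ys = 0") (simp_all add: sgn_div_norm scaleR_blinfun.rep_eq)
    show ?thesis
    proof (intro exI[of _ "\<lambda>x. norm ys *\<^sub>R D x"] allI conjI)
      show "((\<lambda>z. blinfun_apply ys (F z)) has_derivative blinfun_apply (norm ys *\<^sub>R D x)) (at x)" for x
        using has_derivative_mult_right[OF deriv[of x], of "norm ys"]
        by (simp add: ys_eq scaleR_blinfun.rep_eq)
      show "norm (norm ys *\<^sub>R D x - norm ys *\<^sub>R D y) \<le> L * norm ys * norm (x - y)" for x y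
        using mult_left_mono[OF lipschitz[of x y], of "norm ys"]
        by (simp flip: scaleR_diff_right add: mult_ac)
    qed
  qed
  then show ?thesis
    by metis
qed

locale scalarly_lipschitz_differentiable =
  fixes F :: "'a::real_normed_vector \<Rightarrow> 'b::real_normed_vector"
    and D :: "('b \<Rightarrow>\<^sub>L real) \<Rightarrow> 'a \<Rightarrow> 'a \<Rightarrow>\<^sub>L real"
    and L :: real
  assumes has_derivative_scalarization:
      "((\<lambda>z. blinfun_apply f (F z)) has_derivative blinfun_apply (D f x)) (at x)"
    and lipschitz_scalarization: "norm (D f x - D f y) \<le> L * norm f * norm (x - y)"
    and L_nonneg: "0 \<le> L"
begin

lemma D_add: "D (f + g) x = D f x + D g x"
proof -
  have "((\<lambda>z. blinfun_apply (f + g) (F z)) has_derivative blinfun_apply (D f x + D g x)) (at x)"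
    using has_derivative_add[OF has_derivative_scalarization has_derivative_scalarization]
    by (simp add: plus_blinfun.rep_eq)
  then show ?thesis
    using has_derivative_unique[OF has_derivative_scalarization] blinfun_apply_inject by blast
qed

lemma D_scaleR: "D (r *\<^sub>R f) x = r *\<^sub>R D f x"
proof -
  have "((\<lambda>z. blinfun_apply (r *\<^sub>R f) (F z)) has_derivative blinfun_apply (r *\<^sub>R D f x)) (at x)"
    using has_derivative_mult_right[OF has_derivative_scalarization, of r]
    by (simp add: scaleR_blinfun.rep_eq)
  then show ?thesis
    using has_derivative_unique[OF has_derivative_scalarization] blinfun_apply_inject by blast
qed

lemma scalarization_remainder_bound:
  "\<bar>blinfun_apply f (F (x + h)) - blinfun_apply f (F x) - blinfun_apply (D f x) h\<bar>
    \<le> L * norm f * norm h ^ 2"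
  using lipschitz_deriv_remainder_bound[OF has_derivative_scalarization lipschitz_scalarization]
    L_nonneg by simp

lemma D_apply_bound:
  "\<bar>blinfun_apply (D f x) h\<bar> \<le> norm f * (norm (F (x + h) - F x) + L * norm h ^ 2)"
proof -
  have "\<bar>blinfun_apply f (F (x + h)) - blinfun_apply f (F x)\<bar> \<le> norm f * norm (F (x + h) - F x)"
    using norm_blinfun[of f "F (x + h) - F x"] by (simp add: blinfun.diff_right)
  with scalarization_remainder_bound[of f x h] show ?thesis
    by (simp add: algebra_simps)
qed

lemma bounded_linear_D_apply: "bounded_linear (\<lambda>f. blinfun_apply (D f x) h)"
proof (rule bounded_linear_intro[where K="norm (F (x + h) - F x) + L * norm h ^ 2"])
  show "blinfun_apply (D (f + g) x) h = blinfun_apply (D f x) h + blinfun_apply (D g x) h" for f g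
    by (simp add: D_add plus_blinfun.rep_eq)
  show "blinfun_apply (D (r *\<^sub>R f) x) h = r *\<^sub>R blinfun_apply (D f x) h" for r f
    by (simp add: D_scaleR scaleR_blinfun.rep_eq)
  show "norm (blinfun_apply (D f x) h) \<le> norm f * (norm (F (x + h) - F x) + L * norm h ^ 2)" for f
    using D_apply_bound by simp
qed

end

locale scalarly_lipschitz_differentiable_into_reflexive =
  scalarly_lipschitz_differentiable F D L
  for F :: "'a::real_normed_vector \<Rightarrow> 'b::real_normed_vector" and D L +
  assumes reflexive: "reflexive_space TYPE('b)"
    and continuous: "continuous_on UNIV F"
begin

text \<open>This is the only use of reflexivity: \<open>f \<mapsto> D f x h\<close> is a bounded
  functional on the dual, hence evaluation at a vector \<open>DF x h\<close>.\<close>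

definition DF :: "'a \<Rightarrow> 'a \<Rightarrow> 'b" where
  "DF x h = (SOME v. \<forall>f. blinfun_apply (D f x) h = blinfun_apply f v)"

lemma DF_represents: "blinfun_apply f (DF x h) = blinfun_apply (D f x) h"
proof -
  have "\<exists>v. \<forall>f. blinfun_apply (D f x) h = blinfun_apply f v"
    using reflexive[unfolded reflexive_space_def, rule_format, of "Blinfun (\<lambda>f. D f x h)"]
    by (simp add: bounded_linear_Blinfun_apply[OF bounded_linear_D_apply])
  then have "\<forall>f. blinfun_apply (D f x) h = blinfun_apply f (DF x h)"
    unfolding DF_def by (rule someI_ex)
  then show ?thesis
    by metis
qed

lemma linear_DF: "linear (DF x)"
  by (rule linearI; rule dual_separates_points)
     (simp_all add: DF_represents blinfun.add_right blinfun.scaleR_right)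

lemma norm_DF_le: "norm (DF x h) \<le> norm (F (x + h) - F x) + L * norm h ^ 2"
proof (rule norm_le_if_dual_ball_le)
  fix f :: "'b \<Rightarrow>\<^sub>L real" assume "norm f \<le> 1"
  moreover have "0 \<le> norm (F (x + h) - F x) + L * norm h ^ 2"
    using L_nonneg by simp
  ultimately have "norm f * (norm (F (x + h) - F x) + L * norm h ^ 2)
      \<le> norm (F (x + h) - F x) + L * norm h ^ 2"
    by (intro mult_left_le_one_le) auto
  then show "blinfun_apply f (DF x h) \<le> norm (F (x + h) - F x) + L * norm h ^ 2"
    using D_apply_bound[of f x h] by (simp add: DF_represents)
qed

lemma bounded_linear_DF: "bounded_linear (DF x)"
proof -
  obtain \<delta> where "\<delta> > 0" and \<delta>: "\<And>z. dist z x < \<delta> \<Longrightarrow> dist (F z) (F x) < 1"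
    using continuous[unfolded continuous_on_iff, rule_format, OF UNIV_I zero_less_one] by blast
  have "norm (DF x h) \<le> 1 + L * (\<delta> / 2) ^ 2" if "norm h \<le> \<delta> / 2" for h
  proof -
    have "norm (F (x + h) - F x) \<le> 1"
      using \<delta>[of "x + h"] that \<open>\<delta> > 0\<close> by (simp add: dist_norm)
    moreover have "L * norm h ^ 2 \<le> L * (\<delta> / 2) ^ 2"
      using that L_nonneg by (intro mult_left_mono power_mono) auto
    ultimately show ?thesis
      using norm_DF_le[of x h] by linarith
  qed
  then show ?thesis
    using linear_DF \<open>\<delta> > 0\<close> by (intro bounded_linear_if_bounded_on_cball[where \<delta>="\<delta> / 2"]) auto
qed

lemma has_derivative_DF: "(F has_derivative DF x) (at x)"
proof (rule has_derivative_if_quadratic_remainder[OF bounded_linear_DF])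
  fix y
  show "norm (F y - F x - DF x (y - x)) \<le> L * norm (y - x) ^ 2"
  proof (rule norm_le_if_dual_ball_le)
    fix f :: "'b \<Rightarrow>\<^sub>L real" assume "norm f \<le> 1"
    have "blinfun_apply f (F y - F x - DF x (y - x)) \<le> L * norm f * norm (y - x) ^ 2"
      using scalarization_remainder_bound[of f x "y - x"]
      by (simp add: blinfun.diff_right DF_represents)
    also have "\<dots> \<le> L * norm (y - x) ^ 2"
      using \<open>norm f \<le> 1\<close> L_nonneg
      by (simp add: mult.assoc mult_left_mono mult_left_le_one_le)
    finally show "blinfun_apply f (F y - F x - DF x (y - x)) \<le> L * norm (y - x) ^ 2" .
  qed
qed

lemma norm_DF_diff_le: "norm (DF x h - DF y h) \<le> L * norm (x - y) * norm h"
proof (rule norm_le_if_dual_ball_le)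
  fix f :: "'b \<Rightarrow>\<^sub>L real" assume "norm f \<le> 1"
  have "blinfun_apply f (DF x h - DF y h) = blinfun_apply (D f x - D f y) h"
    by (simp add: blinfun.diff_right blinfun.diff_left DF_represents)
  also have "\<dots> \<le> norm (D f x - D f y) * norm h"
    using norm_blinfun[of "D f x - D f y" h] by simp
  also have "\<dots> \<le> L * norm f * norm (x - y) * norm h"
    by (intro mult_right_mono lipschitz_scalarization norm_ge_zero)
  also have "\<dots> \<le> L * norm (x - y) * norm h"
    using \<open>norm f \<le> 1\<close> L_nonneg
    by (intro mult_right_mono mult_left_mono[of "norm f" 1 L, simplified]) auto
  finally show "blinfun_apply f (DF x h - DF y h) \<le> L * norm (x - y) * norm h" .
qed

end

theorem lemma2p3:
  fixes F :: "'a::banach \<Rightarrow> 'b::banach" and L :: real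
  assumes "reflexive_space TYPE('b)"
    and "continuous_on UNIV F"
    and "L > 0"
    and "\<forall>ys :: 'b \<Rightarrow>\<^sub>L real. norm ys \<le> 1 \<longrightarrow>
           (\<exists>D :: 'a \<Rightarrow> ('a \<Rightarrow>\<^sub>L real).
              (\<forall>x. ((\<lambda>z. blinfun_apply ys (F z)) has_derivative blinfun_apply (D x)) (at x)) \<and>
              (\<forall>x y. norm (D x - D y) \<le> L * norm (x - y)))"
  shows "\<exists>D :: 'a \<Rightarrow> ('a \<Rightarrow>\<^sub>L 'b).
           (\<forall>x. (F has_derivative blinfun_apply (D x)) (at x)) \<and>
           (\<forall>x y. norm (D x - D y) \<le> L * norm (x - y))"
proof -
  obtain D :: "('b \<Rightarrow>\<^sub>L real) \<Rightarrow> 'a \<Rightarrow> 'a \<Rightarrow>\<^sub>L real" where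
    "\<And>ys x y. ((\<lambda>z. blinfun_apply ys (F z)) has_derivative blinfun_apply (D ys x)) (at x) \<and>
      norm (D ys x - D ys y) \<le> L * norm ys * norm (x - y)"
    using lipschitz_derivs_of_all_functionals[OF assms(4)] by blast
  then interpret scalarly_lipschitz_differentiable_into_reflexive F D L
    using assms(1-3) by unfold_locales auto
  show ?thesis
  proof (intro exI[of _ "\<lambda>x. Blinfun (DF x)"] conjI allI)
    show "(F has_derivative blinfun_apply (Blinfun (DF x))) (at x)" for x
      by (simp add: bounded_linear_Blinfun_apply[OF bounded_linear_DF] has_derivative_DF)
    show "norm (Blinfun (DF x) - Blinfun (DF y)) \<le> L * norm (x - y)" for x y
      using L_nonneg norm_DF_diff_le
      by (intro norm_blinfun_bound)
         (simp_all add: minus_blinfun.rep_eq bounded_linear_Blinfun_apply[OF bounded_linear_DF])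
  qed
qed

end
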